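(* For every integer $n\ge 1$, the element $g_n=s^nas^{-n}t^nat^{-2n}at^n\in G$ satisfies $d_{\mathcal A}(1,g_n)=6n$, and every $h\in G$ with $d_{\mathcal A}(1,h)>6n$ satisfies $d_{\mathcal A}(g_n,h)>n$. In particular the depth of $g_n$ with respect to $\mathcal A$ is at least $n$.
   Context: $G=\langle a,s,t \mid a^2=1,\ [a,a^t]=1,\ [s,t]=1,\ a^s=aa^t\rangle$, where $[x,y]=x^{-1}y^{-1}xy$ and $x^y=y^{-1}xy$. $\mathcal A=\{a,s,t,at,ta,ata,as,sa,asa\}$ and $d_{\mathcal A}$ is the word metric on $G$ with respect to $\mathcal A$ (lengths of words in $\mathcal A\cup\mathcal A^{-1}$). The depth of $g\in G$ is the $d_{\mathcal A}$-distance from $g$ to the complement of the closed ball $\{h: d_{\mathcal A}(1,h)\le d_{\mathcal A}(1,g)\}$. *)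

theory Defs
  imports Main
begin

text \<open>The group G = < a,s,t | a^2, [a,a^t], [s,t], a^s = a a^t > is modelled by words
  over the letters a,s,t and their inverses, modulo the congruence generated by free
  cancellation and the defining relators.\<close>

datatype gen = A | S | T

type_synonym letter = "gen \<times> bool"   \<comment> \<open>(x, False) = x, (x, True) = x^{-1}\<close>
type_synonym word = "letter list"

definition linv :: "letter \<Rightarrow> letter" where
  "linv l = (fst l, \<not> snd l)"

definition winv :: "word \<Rightarrow> word" where
  "winv w = rev (map linv w)"

definition ga :: word where "ga = [(A,False)]"
definition gs :: word where "gs = [(S,False)]"
definition gt :: word where "gt = [(T,False)]"

definition wpow :: "word \<Rightarrow> int \<Rightarrow> word" where
  "wpow w k = (if k \<ge> 0 then concat (replicate (nat k) w) else concat (replicate (nat (-k)) (winv w)))"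

definition conj :: "word \<Rightarrow> word \<Rightarrow> word" where
  "conj x y = winv y @ x @ y"
definition comm :: "word \<Rightarrow> word \<Rightarrow> word" where
  "comm x y = winv x @ winv y @ x @ y"

definition relators :: "word set" where
  "relators = { ga @ ga,
                comm ga (conj ga gt),
                comm gs gt,
                conj ga gs @ winv (ga @ conj ga gt) }"

inductive geq :: "word \<Rightarrow> word \<Rightarrow> bool" where
  geq_refl: "geq u u"
| geq_sym: "geq u v \<Longrightarrow> geq v u"
| geq_trans: "geq u v \<Longrightarrow> geq v w \<Longrightarrow> geq u w"
| geq_cancel: "geq (u @ [x, linv x] @ v) (u @ v)"
| geq_rel: "r \<in> relators \<Longrightarrow> geq (u @ r @ v) (u @ v)"

datatype agen = Ga | Gs | Gt | Gat | Gta | Gata | Gas | Gsa | Gasa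

fun agword :: "agen \<Rightarrow> word" where
  "agword Ga = ga"
| "agword Gs = gs"
| "agword Gt = gt"
| "agword Gat = ga @ gt"
| "agword Gta = gt @ ga"
| "agword Gata = ga @ gt @ ga"
| "agword Gas = ga @ gs"
| "agword Gsa = gs @ ga"
| "agword Gasa = ga @ gs @ ga"

definition evalA :: "(agen \<times> bool) list \<Rightarrow> word" where
  "evalA ws = concat (map (\<lambda>(g,b). if b then winv (agword g) else agword g) ws)"

definition dA :: "word \<Rightarrow> word \<Rightarrow> nat" where
  "dA g h = (LEAST k. \<exists>ws. length ws = k \<and> geq (evalA ws) (winv g @ h))"

definition depth :: "word \<Rightarrow> nat" where
  "depth g = (LEAST k. \<exists>h. dA [] h > dA [] g \<and> dA g h = k)"

definition gn :: "nat \<Rightarrow> word" where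
  "gn n = wpow gs (int n) @ ga @ wpow gs (- int n) @ wpow gt (int n) @ ga
          @ wpow gt (- 2 * int n) @ ga @ wpow gt (int n)"

end

theory Submission
  imports Defs "HOL-Library.Product_Plus"
begin

text \<open>
  Put \<open>pos (i, j) = s\<^sup>i t\<^sup>j\<close> and let \<open>lamp (i, j)\<close> be the conjugate of \<open>a\<close> by \<open>pos (i, j)\<close>.
  The relations make the lamps commuting involutions with
  \<open>lamp (i - 1, j) = lamp (i, j) + lamp (i, j - 1)\<close>, and a word in \<open>a, s, t\<close> evaluates to the
  sum of the lamps at the points where the walk in \<open>\<int>\<^sup>2\<close> traced by its letters \<open>s, t\<close> reads an
  \<open>a\<close>, followed by the position of the endpoint. Each generator in \<open>\<A>\<close> makes at most one step.

  Upper bound: \<open>g\<^sub>n\<close> lights the lamps at \<open>(n, 0), (0, n), (0, - n)\<close> and returns to the origin, so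
  every \<open>h\<close> with \<open>d(g\<^sub>n, h) \<le> n\<close> is a sum of lamps in the triangle \<open>i \<le> n, j \<le> n, i + j \<ge> - n\<close>
  followed by a position at distance at most \<open>n\<close>. The walk from the origin to \<open>(n, 0)\<close>, back to
  \<open>(- n, 0)\<close>, up to \<open>(- n, n)\<close> and on to that position has at most \<open>6n\<close> steps, and by the lamp
  relation the lamps at its points generate all lamps of the triangle. Toggling the right lamps
  along it, each toggle absorbed into an adjacent step, spells \<open>h\<close> with at most \<open>6n\<close> generators.

  Lower bound: every \<open>\<phi> : \<int>\<^sup>2 \<rightarrow> \<bbbF>\<^sub>2\<close> with \<open>\<phi> (i - 1, j) = \<phi> (i, j) + \<phi> (i, j - 1)\<close> turns
  the parity of the lit lamps counted by \<open>\<phi>\<close> into an invariant of the group element. Binomial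
  coefficients mod 2 give three such \<open>\<phi>\<close>, each odd on \<open>g\<^sub>n\<close> and supported in one of the regions
  \<open>j \<ge> n\<close>, \<open>i \<ge> n\<close>, \<open>i + j \<le> - n\<close>. Hence every word for \<open>g\<^sub>n\<close> is a closed walk meeting all
  three regions, and such a walk has at least \<open>6n\<close> steps.
\<close>

section \<open>The group as a quotient of words\<close>

lemma linv_linv [simp]: "linv (linv x) = x"
  by (simp add: linv_def)

lemma winv_Nil [simp]: "winv [] = []"
  and winv_Cons [simp]: "winv (x # u) = winv u @ [linv x]"
  and winv_append [simp]: "winv (u @ v) = winv v @ winv u"
  and winv_winv [simp]: "winv (winv u) = u"
  by (simp_all add: winv_def rev_map comp_def)

lemma geq_append_context: "geq u v \<Longrightarrow> geq (p @ u @ q) (p @ v @ q)"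
proof (induction rule: geq.induct)
  case (geq_cancel u x v)
  show ?case using geq.geq_cancel[of "p @ u" x "v @ q"] by simp
next
  case (geq_rel r u v)
  then show ?case using geq.geq_rel[of r "p @ u" "v @ q"] by simp
qed (auto intro: geq.intros)

lemma geq_append: "geq u u' \<Longrightarrow> geq v v' \<Longrightarrow> geq (u @ v) (u' @ v')"
  using geq_append_context[of u u' "[]" v] geq_append_context[of v v' u' "[]"]
  by (auto intro: geq_trans)

lemma geq_winv_append_cancel: "geq (winv u @ u) []"
proof (induction u)
  case (Cons x u)
  have "geq (winv u @ [linv x, linv (linv x)] @ u) (winv u @ u)"
    by (rule geq_cancel)
  with Cons.IH show ?case
    by (auto intro: geq_trans)
qed (simp add: geq_refl)

lemma geq_relator: "r \<in> relators \<Longrightarrow> geq r []"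
  using geq_rel[of r "[]" "[]"] by simp

lemma geq_winv: "geq u v \<Longrightarrow> geq (winv u) (winv v)"
proof (induction rule: geq.induct)
  case (geq_cancel u x v)
  show ?case using geq.geq_cancel[of "winv v" x "winv u"] by simp
next
  case (geq_rel r u v)
  have "geq (winv r) (winv r @ r)"
    using geq_append[OF geq_refl geq_sym[OF geq_relator[OF geq_rel]]] by simp
  then have "geq (winv r) []"
    using geq_winv_append_cancel geq_trans by blast
  then show ?case
    using geq_append_context[of "winv r" "[]" "winv v" "winv u"] by simp
qed (auto intro: geq.intros)

quotient_type grp = word / geq
  by (rule equivpI) (auto simp: reflp_def symp_def transp_def intro: geq.intros)

instantiation grp :: group_add
begin

lift_definition zero_grp :: grp is "[]" .
lift_definition plus_grp :: "grp \<Rightarrow> grp \<Rightarrow> grp" is "(@)"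
  by (rule geq_append)
lift_definition uminus_grp :: "grp \<Rightarrow> grp" is winv
  by (rule geq_winv)
definition minus_grp :: "grp \<Rightarrow> grp \<Rightarrow> grp" where
  "minus_grp x y = x + - y"

instance
proof
  fix x y z :: grp
  show "x + y + z = x + (y + z)" by transfer (simp add: geq_refl)
  show "0 + x = x" by transfer (simp add: geq_refl)
  show "x + 0 = x" by transfer (simp add: geq_refl)
  show "- x + x = 0" by transfer (rule geq_winv_append_cancel)
  show "x + - y = x - y" by (simp add: minus_grp_def)
qed

end

lemma abs_grp_eq_iff: "abs_grp u = abs_grp v \<longleftrightarrow> geq u v"
  using Quotient3_rel[OF Quotient3_grp] by (simp add: geq_refl)

lemma abs_grp_Nil: "abs_grp [] = 0"
  and abs_grp_append: "abs_grp (u @ v) = abs_grp u + abs_grp v"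
  and abs_grp_winv: "abs_grp (winv u) = - abs_grp u"
  by (simp_all add: zero_grp.abs_eq plus_grp.abs_eq uminus_grp.abs_eq)

lemma abs_grp_relator: "r \<in> relators \<Longrightarrow> abs_grp r = 0"
  by (simp add: abs_grp_Nil[symmetric] abs_grp_eq_iff geq_relator)

text \<open>Sums in a non-commutative group are kept in the form \<open>x + - y\<close>, which reassociates freely.\<close>

declare add_uminus_conv_diff [simp del]
lemmas int_add_uminus_conv_diff [simp] = add_uminus_conv_diff [where 'a = int]

definition zpow :: "'a::group_add \<Rightarrow> int \<Rightarrow> 'a" where
  "zpow x k = (if 0 \<le> k then sum_list (replicate (nat k) x)
               else - sum_list (replicate (nat (- k)) x))"

lemma sum_list_replicate_commute: "x + sum_list (replicate k x) = sum_list (replicate k x) + x"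
  by (induction k) (simp_all flip: add.assoc)

lemma zpow_0 [simp]: "zpow x 0 = 0"
  and zpow_1 [simp]: "zpow x 1 = x"
  and zpow_minus_1 [simp]: "zpow x (- 1) = - x"
  by (simp_all add: zpow_def)

lemma zpow_add_1: "zpow x (k + 1) = zpow x k + x"
proof (cases "0 \<le> k")
  case True
  then have "nat (k + 1) = Suc (nat k)" by simp
  with True show ?thesis by (simp add: zpow_def sum_list_replicate_commute)
next
  case False
  then obtain m where m: "nat (- k) = Suc m" "nat (- (k + 1)) = m"
    by (intro that[of "nat (- k - 1)"]) auto
  with False show ?thesis
    by (auto simp: zpow_def minus_add add.assoc)
qed

lemma zpow_diff_1: "zpow x (k - 1) = zpow x k + - x"
  using zpow_add_1[of x "k - 1"] by (simp add: add.assoc)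

lemma zpow_add: "zpow x (k + l) = zpow x k + zpow x l"
proof (induction l rule: int_induct[where k = 0])
  case (step1 l)
  then show ?case
    using zpow_add_1[of x "k + l"] zpow_add_1[of x l] by (simp add: add.assoc)
next
  case (step2 l)
  then show ?case
    using zpow_diff_1[of x "k + l"] zpow_diff_1[of x l] by (simp add: add.assoc add_diff_eq)
qed simp

lemma commute_of_commutator:
  fixes x y :: "'a::group_add"
  assumes "- x + - y + x + y = 0"
  shows "x + y = y + x"
proof -
  have "y + x + (- x + - y + x + y) = y + x"
    by (simp add: assms)
  then show ?thesis
    by (simp add: add.assoc)
qed

lemma commute_uminus:
  fixes x y :: "'a::group_add"
  assumes "x + y = y + x"
  shows "x + - y = - y + x"
proof -
  have "x + - y = - y + (y + x) + - y"
    by (simp add: add.assoc)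
  also have "\<dots> = - y + x"
    by (simp flip: assms add: add.assoc)
  finally show ?thesis .
qed

lemma conj_add_distrib:
  fixes c x y :: "'a::group_add"
  shows "c + (x + y) + - c = (c + x + - c) + (c + y + - c)"
  by (simp add: add.assoc)

lemma conj_commute:
  fixes c x y :: "'a::group_add"
  assumes "x + y = y + x"
  shows "(c + x + - c) + (c + y + - c) = (c + y + - c) + (c + x + - c)"
  using assms by (simp flip: conj_add_distrib)

lemma commute_of_sums_commute:
  fixes b c d e :: "'a::group_add"
  assumes bc: "b + c = c + b" and bd: "b + d = d + b" and cd: "c + d = d + c"
    and ce: "c + e = e + c" and sums: "(b + c) + (d + e) = (d + e) + (b + c)"
  shows "b + e = e + b"
proof -
  have left_commute: "x + (y + z) = y + (x + z)" if "x + y = y + x" for x y z :: 'a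
    by (simp add: that flip: add.assoc)
  have "d + (c + (b + e)) = d + (b + (c + e))"
    by (simp add: left_commute[OF bc])
  also have "\<dots> = b + (c + (d + e))"
    by (simp add: left_commute[OF bd] left_commute[OF cd])
  also have "\<dots> = d + (e + (b + c))"
    using sums by (simp add: add.assoc)
  also have "\<dots> = d + (c + (e + b))"
    by (simp only: bc left_commute[OF ce[symmetric]])
  finally show ?thesis
    by simp
qed

lemma commute_sum_list:
  fixes x :: "'a::group_add"
  assumes "\<forall>y\<in>set ys. x + y = y + x"
  shows "x + sum_list ys = sum_list ys + x"
  using assms
proof (induction ys)
  case (Cons y ys)
  then have "x + sum_list (y # ys) = y + (x + sum_list ys)"
    by (metis add.assoc list.set_intros(1) sum_list.Cons)
  with Cons show ?case
    by (simp add: add.assoc)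
qed simp

lemma sum_list_commute_sum_list:
  fixes xs ys :: "'a::group_add list"
  assumes "\<forall>x\<in>set xs. \<forall>y\<in>set ys. x + y = y + x"
  shows "sum_list xs + sum_list ys = sum_list ys + sum_list xs"
proof -
  have "\<forall>x\<in>set xs. sum_list ys + x = x + sum_list ys"
    using assms commute_sum_list by metis
  then show ?thesis
    using commute_sum_list by metis
qed

lemma zpow_commute:
  fixes x y :: "'a::group_add"
  assumes xy: "x + y = y + x"
  shows "x + zpow y k = zpow y k + x"
proof (induction k rule: int_induct[where k = 0])
  case (step1 k)
  have "x + zpow y (k + 1) = (x + zpow y k) + y"
    by (simp add: zpow_add_1 add.assoc)
  also have "\<dots> = zpow y k + (x + y)"
    by (simp add: step1.IH add.assoc)
  finally show ?case
    by (simp add: xy zpow_add_1 add.assoc)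
next
  case (step2 k)
  have "x + zpow y (k - 1) = (x + zpow y k) + - y"
    by (simp add: zpow_diff_1 add.assoc)
  also have "\<dots> = zpow y k + (x + - y)"
    by (simp add: step2.IH add.assoc)
  finally show ?case
    by (simp add: commute_uminus[OF xy] zpow_diff_1 add.assoc)
qed simp

section \<open>Positions and lamps\<close>

definition aG :: grp where "aG = abs_grp ga"
definition sG :: grp where "sG = abs_grp gs"
definition tG :: grp where "tG = abs_grp gt"

lemma aG_add_aG: "aG + aG = 0"
  using abs_grp_relator[of "ga @ ga"] by (simp add: relators_def abs_grp_append aG_def)

lemma minus_aG [simp]: "- aG = aG"
  using aG_add_aG by (simp add: neg_eq_iff_add_eq_0)

lemma sG_tG_commute: "sG + tG = tG + sG"
  using abs_grp_relator[of "comm gs gt"]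
  by (intro commute_of_commutator)
    (simp add: relators_def comm_def abs_grp_append abs_grp_winv sG_def tG_def add.assoc)

lemma aG_commute_conj_tG: "aG + (- tG + aG + tG) = (- tG + aG + tG) + aG"
  using abs_grp_relator[of "comm ga (conj ga gt)"]
  by (intro commute_of_commutator)
    (simp add: relators_def comm_def conj_def abs_grp_append abs_grp_winv aG_def tG_def minus_add add.assoc)

lemma conj_sG_aG: "- sG + aG + sG = aG + (- tG + aG + tG)"
proof -
  have "(- sG + aG + sG) + - (aG + (- tG + aG + tG)) = 0"
    using abs_grp_relator[of "conj ga gs @ winv (ga @ conj ga gt)"]
    by (simp add: relators_def conj_def abs_grp_append abs_grp_winv aG_def sG_def tG_def
        minus_add add.assoc)
  then show ?thesis
    by (metis eq_neg_iff_add_eq_0 minus_minus)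
qed

definition pos :: "int \<times> int \<Rightarrow> grp" where
  "pos p = zpow sG (fst p) + zpow tG (snd p)"

lemma pos_0 [simp]: "pos 0 = 0"
  by (simp add: pos_def)

lemma pos_add: "pos (p + q) = pos p + pos q"
proof -
  have "zpow tG (snd p) + zpow sG (fst q) = zpow sG (fst q) + zpow tG (snd p)"
    using zpow_commute[OF zpow_commute[OF sG_tG_commute, symmetric]] .
  then show ?thesis
    by (simp add: pos_def zpow_add add.assoc) (simp flip: add.assoc)
qed

definition lamp :: "int \<times> int \<Rightarrow> grp" where
  "lamp p = pos p + aG + - pos p"

lemma conj_pos_lamp: "pos q + lamp p + - pos q = lamp (q + p)"
  by (simp add: lamp_def pos_add minus_add add.assoc)

lemma lamp_add_lamp: "lamp p + lamp p = 0"
proof -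
  have "lamp p + lamp p = pos p + (aG + aG) + - pos p"
    by (simp add: lamp_def add.assoc)
  then show ?thesis
    by (simp add: aG_add_aG)
qed

lemma lamp_split: "lamp (i - 1, j) = lamp (i, j) + lamp (i, j - 1)"
proof -
  have "lamp (- 1, 0) = lamp (0, 0) + lamp (0, - 1)"
    using conj_sG_aG by (simp add: lamp_def pos_def add.assoc)
  then have "pos (i, j) + lamp (- 1, 0) + - pos (i, j)
      = (pos (i, j) + lamp (0, 0) + - pos (i, j)) + (pos (i, j) + lamp (0, - 1) + - pos (i, j))"
    by (simp add: conj_add_distrib)
  then show ?thesis
    by (simp add: conj_pos_lamp)
qed

lemma lamp_centre: "lamp (i, j) = lamp (i - 1, j) + lamp (i, j - 1)"
  by (simp add: lamp_split add.assoc lamp_add_lamp)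

lemma lamp_south: "lamp (i, j - 1) = lamp (i, j) + lamp (i - 1, j)"
  by (simp add: lamp_split lamp_add_lamp flip: add.assoc)

lemma lamp_commute_below: "lamp (i, j) + lamp (i, j - 1) = lamp (i, j - 1) + lamp (i, j)"
proof -
  have "lamp (0, 0) + lamp (0, - 1) = lamp (0, - 1) + lamp (0, 0)"
    using aG_commute_conj_tG by (simp add: lamp_def pos_def add.assoc)
  from conj_commute[OF this, of "pos (i, j)"] show ?thesis
    by (simp add: conj_pos_lamp)
qed

lemma lamp_commute_column_distance:
  "lamp (i, j) + lamp (i, j - int d) = lamp (i, j - int d) + lamp (i, j)"
proof (induction d arbitrary: i j rule: less_induct)
  case (less d)
  consider "d = 0" | "d = 1" | k where "d = k + 2"
    by atomize_elim presburger
  then show ?case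
  proof cases
    case 3
    have bc: "lamp (i, j) + lamp (i, j - 1) = lamp (i, j - 1) + lamp (i, j)"
      by (rule lamp_commute_below)
    have bd: "lamp (i, j) + lamp (i, j - int (k + 1)) = lamp (i, j - int (k + 1)) + lamp (i, j)"
      using less.IH[of "k + 1" i j] 3 by simp
    have cd: "lamp (i, j - 1) + lamp (i, j - int (k + 1)) = lamp (i, j - int (k + 1)) + lamp (i, j - 1)"
      using less.IH[of k i "j - 1"] 3 by (simp add: algebra_simps)
    have ce: "lamp (i, j - 1) + lamp (i, j - int d) = lamp (i, j - int d) + lamp (i, j - 1)"
      using less.IH[of "k + 1" i "j - 1"] 3 by (simp add: algebra_simps)
    have "lamp (i - 1, j) + lamp (i - 1, j - int (k + 1))
        = lamp (i - 1, j - int (k + 1)) + lamp (i - 1, j)"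
      using less.IH[of "k + 1" "i - 1" j] 3 by simp
    moreover have "j - int (k + 1) - 1 = j - int d"
      using 3 by simp
    ultimately have sums: "(lamp (i, j) + lamp (i, j - 1)) + (lamp (i, j - int (k + 1)) + lamp (i, j - int d))
        = (lamp (i, j - int (k + 1)) + lamp (i, j - int d)) + (lamp (i, j) + lamp (i, j - 1))"
      by (simp only: lamp_split)
    show ?thesis
      by (rule commute_of_sums_commute[OF bc bd cd ce sums])
  qed (simp_all add: lamp_commute_below)
qed

lemma lamp_commute_column: "lamp (i, j) + lamp (i, j') = lamp (i, j') + lamp (i, j)"
  using lamp_commute_column_distance[of i j "nat (j - j')"]
    lamp_commute_column_distance[of i j' "nat (j' - j)"]
  by (cases "j' \<le> j") simp_all

lemma lamp_eq_column_sum: "\<exists>js. lamp (i, j) = sum_list (map (\<lambda>j'. lamp (i + int m, j')) js)"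
proof (induction m arbitrary: i j)
  case 0
  show ?case
    by (rule exI[of _ "[j]"]) simp
next
  case (Suc m)
  obtain js1 js2 where
    "lamp (i + 1, j) = sum_list (map (\<lambda>j'. lamp (i + 1 + int m, j')) js1)"
    "lamp (i + 1, j - 1) = sum_list (map (\<lambda>j'. lamp (i + 1 + int m, j')) js2)"
    using Suc.IH by blast
  then have "lamp (i, j) = sum_list (map (\<lambda>j'. lamp (i + int (Suc m), j')) (js1 @ js2))"
    using lamp_split[of "i + 1" j] by (simp add: algebra_simps)
  then show ?case ..
qed

lemma lamp_commute: "lamp p + lamp q = lamp q + lamp p"
proof -
  obtain i j i' j' where pq: "p = (i, j)" "q = (i', j')"
    by fastforce
  define c where "c = max i i'"
  have "i + int (nat (c - i)) = c" "i' + int (nat (c - i')) = c"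
    by (simp_all add: c_def)
  then obtain js js' where
    "lamp p = sum_list (map (\<lambda>j. lamp (c, j)) js)"
    "lamp q = sum_list (map (\<lambda>j. lamp (c, j)) js')"
    using lamp_eq_column_sum[of i j "nat (c - i)"] lamp_eq_column_sum[of i' j' "nat (c - i')"]
    by (metis pq)
  moreover have "\<forall>x\<in>set (map (\<lambda>j. lamp (c, j)) js). \<forall>y\<in>set (map (\<lambda>j. lamp (c, j)) js').
      x + y = y + x"
    using lamp_commute_column by auto
  ultimately show ?thesis
    by (simp add: sum_list_commute_sum_list)
qed

definition lamps :: "(int \<times> int) list \<Rightarrow> grp" where
  "lamps P = sum_list (map lamp P)"

lemma lamps_Nil [simp]: "lamps [] = 0"
  and lamps_Cons [simp]: "lamps (p # P) = lamp p + lamps P"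
  and lamps_append: "lamps (P @ P') = lamps P + lamps P'"
  by (simp_all add: lamps_def)

fun selected :: "'a list \<Rightarrow> bool list \<Rightarrow> 'a list" where
  "selected (x # xs) (b # bs) = (if b then x # selected xs bs else selected xs bs)"
| "selected _ _ = []"

lemma selected_replicate_False: "selected xs (replicate n False) = []"
proof (induction xs arbitrary: n)
  case (Cons x xs)
  then show ?case
    by (cases n) simp_all
qed simp

lemma lamp_add_lamps_selected:
  assumes "p \<in> set Q" and "length bs = length Q"
  shows "\<exists>bs'. length bs' = length Q \<and> lamp p + lamps (selected Q bs) = lamps (selected Q bs')"
  using assms
proof (induction Q arbitrary: bs)
  case (Cons q Q)
  obtain b bs0 where bs: "bs = b # bs0" and len: "length bs0 = length Q"
    using Cons.prems(2) by (cases bs) auto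
  show ?case
  proof (cases "p = q")
    case True
    have "lamp q + lamps (selected (q # Q) bs) = lamps (selected (q # Q) ((\<not> b) # bs0))"
      using lamp_add_lamp[of q] by (simp add: bs flip: add.assoc)
    then show ?thesis
      using True len by (metis length_Cons)
  next
    case False
    then obtain bs0' where len': "length bs0' = length Q"
      and IH: "lamp p + lamps (selected Q bs0) = lamps (selected Q bs0')"
      using Cons len by auto
    have "lamp p + lamps (selected (q # Q) bs) = (if b then lamp q else 0) + (lamp p + lamps (selected Q bs0))"
      using lamp_commute[of p q] by (simp add: bs flip: add.assoc)
    also have "\<dots> = lamps (selected (q # Q) (b # bs0'))"
      by (simp add: IH)
    finally show ?thesis
      using len' by (intro exI[of _ "b # bs0'"]) simp
  qed
qed simp

lemma lamps_eq_lamps_selected: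
  assumes "set P \<subseteq> set Q"
  shows "\<exists>bs. length bs = length Q \<and> lamps P = lamps (selected Q bs)"
  using assms
proof (induction P)
  case Nil
  show ?case
    by (intro exI[of _ "replicate (length Q) False"]) (simp add: selected_replicate_False)
next
  case (Cons p P)
  then obtain bs where "length bs = length Q" "lamps P = lamps (selected Q bs)"
    by auto
  with Cons.prems show ?case
    using lamp_add_lamps_selected[of p Q bs] by auto
qed

text \<open>Since \<open>lamp (i - 1, j) = lamp (i, j) + lamp (i, j - 1)\<close> and lamps are involutions,
  any two lamps of such a triple generate the third.\<close>

inductive_set lamp_closure :: "(int \<times> int) set \<Rightarrow> (int \<times> int) set" for Q where
  base: "p \<in> Q \<Longrightarrow> p \<in> lamp_closure Q"
| west: "(i, j) \<in> lamp_closure Q \<Longrightarrow> (i, j - 1) \<in> lamp_closure Q \<Longrightarrow> (i - 1, j) \<in> lamp_closure Q"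
| centre: "(i - 1, j) \<in> lamp_closure Q \<Longrightarrow> (i, j - 1) \<in> lamp_closure Q \<Longrightarrow> (i, j) \<in> lamp_closure Q"
| south: "(i, j) \<in> lamp_closure Q \<Longrightarrow> (i - 1, j) \<in> lamp_closure Q \<Longrightarrow> (i, j - 1) \<in> lamp_closure Q"

lemma lamp_closure_lamps:
  assumes "p \<in> lamp_closure Q"
  shows "\<exists>P. set P \<subseteq> Q \<and> lamp p = lamps P"
  using assms
proof induction
  case (base p)
  then show ?case
    by (intro exI[of _ "[p]"]) simp
next
  case (west i j)
  then obtain P1 P2 where "set P1 \<subseteq> Q" "lamp (i, j) = lamps P1" "set P2 \<subseteq> Q" "lamp (i, j - 1) = lamps P2"
    by blast
  then show ?case
    by (intro exI[of _ "P1 @ P2"]) (simp add: lamp_split lamps_append)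
next
  case (centre i j)
  then obtain P1 P2 where "set P1 \<subseteq> Q" "lamp (i - 1, j) = lamps P1" "set P2 \<subseteq> Q" "lamp (i, j - 1) = lamps P2"
    by blast
  then show ?case
    by (intro exI[of _ "P1 @ P2"]) (simp add: lamp_centre[of i j] lamps_append)
next
  case (south i j)
  then obtain P1 P2 where "set P1 \<subseteq> Q" "lamp (i, j) = lamps P1" "set P2 \<subseteq> Q" "lamp (i - 1, j) = lamps P2"
    by blast
  then show ?case
    by (intro exI[of _ "P1 @ P2"]) (simp add: lamp_south[of i j] lamps_append)
qed

lemma lamp_closure_swap:
  assumes "p \<in> lamp_closure Q"
  shows "prod.swap p \<in> lamp_closure (prod.swap ` Q)"
  using assms
proof induction
  case (west i j)
  then show ?case
    using lamp_closure.south[of j i] by simp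
next
  case (centre i j)
  then show ?case
    using lamp_closure.centre[of j i] by simp
next
  case (south i j)
  then show ?case
    using lamp_closure.west[of j i] by simp
qed (auto intro: lamp_closure.base)

lemma lamp_closure_below_row:
  assumes row: "\<And>i. i0 \<le> i \<Longrightarrow> i \<le> i1 \<Longrightarrow> (i, r) \<in> lamp_closure Q"
  shows "i \<le> i1 \<Longrightarrow> j \<le> r \<Longrightarrow> i0 + r \<le> i + j \<Longrightarrow> (i, j) \<in> lamp_closure Q"
proof (induction "nat (r - j)" arbitrary: i j)
  case (Suc m)
  have "(i, j + 1) \<in> lamp_closure Q" "(i - 1, j + 1) \<in> lamp_closure Q"
    using Suc.hyps(1)[of "j + 1"] Suc.hyps(2) Suc.prems by simp_all
  from lamp_closure.south[OF this] show ?case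
    by simp
qed (use row in auto)

lemma lamp_closure_left_of_column:
  assumes column: "\<And>j. j0 \<le> j \<Longrightarrow> j \<le> j1 \<Longrightarrow> (c, j) \<in> lamp_closure Q"
  shows "i \<le> c \<Longrightarrow> j \<le> j1 \<Longrightarrow> c + j0 \<le> i + j \<Longrightarrow> (i, j) \<in> lamp_closure Q"
proof (induction "nat (c - i)" arbitrary: i j)
  case (Suc m)
  have "(i + 1, j) \<in> lamp_closure Q" "(i + 1, j - 1) \<in> lamp_closure Q"
    using Suc.hyps(1)[of "i + 1"] Suc.hyps(2) Suc.prems by simp_all
  from lamp_closure.west[OF this] show ?case
    by simp
qed (use column in auto)

lemma lamp_closure_above_antidiagonal:
  assumes diagonal: "\<And>i. g - b \<le> i \<Longrightarrow> i \<le> a \<Longrightarrow> (i, g - i) \<in> lamp_closure Q"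
  shows "i \<le> a \<Longrightarrow> j \<le> b \<Longrightarrow> g \<le> i + j \<Longrightarrow> (i, j) \<in> lamp_closure Q"
proof (induction "nat (i + j - g)" arbitrary: i j)
  case 0
  then have "j = g - i" "g - b \<le> i"
    by auto
  with 0 show ?case
    using diagonal by auto
next
  case (Suc m)
  have "(i - 1, j) \<in> lamp_closure Q" "(i, j - 1) \<in> lamp_closure Q"
    using Suc.hyps(1) Suc.hyps(2) Suc.prems by simp_all
  from lamp_closure.centre[OF this] show ?case .
qed

definition triangle :: "int \<Rightarrow> (int \<times> int) set" where
  "triangle n = {(i, j). i \<le> n \<and> j \<le> n \<and> - n \<le> i + j}"

lemma in_triangle_of_norm: "\<bar>fst q\<bar> + \<bar>snd q\<bar> \<le> n \<Longrightarrow> q \<in> triangle n"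
  by (auto simp: triangle_def)

lemma swap_triangle: "prod.swap ` triangle n = triangle n"
  by (auto simp: triangle_def image_iff add.commute)

lemma triangle_subset_lamp_closure:
  assumes row: "\<And>i. - n \<le> i \<Longrightarrow> i \<le> n \<Longrightarrow> (i, 0) \<in> Q"
    and column: "\<And>j. 0 \<le> j \<Longrightarrow> j \<le> n \<Longrightarrow> (- n, j) \<in> Q"
  shows "triangle n \<subseteq> lamp_closure Q"
proof -
  have "(i, - n - i) \<in> lamp_closure Q" if "- 2 * n \<le> i" "i \<le> n" for i
  proof (cases "- n \<le> i")
    case True
    show ?thesis
      by (rule lamp_closure_below_row[of "- n" n 0])
        (use row that True in \<open>auto intro: lamp_closure.base\<close>)
  next
    case False
    show ?thesis
      by (rule lamp_closure_left_of_column[of 0 n "- n"])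
        (use column that False in \<open>auto intro: lamp_closure.base\<close>)
  qed
  then show ?thesis
    unfolding triangle_def
    by (auto intro: lamp_closure_above_antidiagonal[of "- n" n n])
qed

lemma lamp_closure_mono:
  assumes "Q \<subseteq> Q'"
  shows "lamp_closure Q \<subseteq> lamp_closure Q'"
proof
  fix p
  assume "p \<in> lamp_closure Q"
  then show "p \<in> lamp_closure Q'"
    by induction (use assms in \<open>auto intro: lamp_closure.intros\<close>)
qed

lemma lamps_lamp_closure:
  assumes "set P \<subseteq> lamp_closure Q"
  shows "\<exists>P'. set P' \<subseteq> Q \<and> lamps P = lamps P'"
  using assms
proof (induction P)
  case Nil
  show ?case
    by (intro exI[of _ "[]"]) simp
next
  case (Cons p P)
  then obtain P1 P2 where "set P1 \<subseteq> Q" "lamp p = lamps P1" "set P2 \<subseteq> Q" "lamps P = lamps P2"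
    using lamp_closure_lamps by (metis insert_subset list.set(2))
  then show ?case
    by (intro exI[of _ "P1 @ P2"]) (simp add: lamps_append)
qed

section \<open>Walks in the plane\<close>

lemma swap_zero [simp]: "prod.swap 0 = 0"
  by (simp add: zero_prod_def)

lemma Pair_zero [simp]: "(0, 0) = 0"
  by (simp add: zero_prod_def)

fun step :: "letter \<Rightarrow> int \<times> int" where
  "step (S, b) = (if b then - 1 else 1, 0)"
| "step (T, b) = (0, if b then - 1 else 1)"
| "step (A, b) = 0"

definition is_move :: "letter \<Rightarrow> bool" where
  "is_move l \<longleftrightarrow> fst l \<noteq> A"

fun walk_end :: "int \<times> int \<Rightarrow> word \<Rightarrow> int \<times> int" where
  "walk_end p [] = p"
| "walk_end p (l # w) = walk_end (p + step l) w"

fun visited :: "int \<times> int \<Rightarrow> word \<Rightarrow> (int \<times> int) list" where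
  "visited p [] = [p]"
| "visited p (l # w) = p # visited (p + step l) w"

fun lamp_sites :: "int \<times> int \<Rightarrow> word \<Rightarrow> (int \<times> int) list" where
  "lamp_sites p [] = []"
| "lamp_sites p (l # w) = (if fst l = A then [p] else []) @ lamp_sites (p + step l) w"

lemma step_A: "fst l = A \<Longrightarrow> step l = 0"
  by (cases l) auto

lemma walk_end_append: "walk_end p (u @ v) = walk_end (walk_end p u) v"
  by (induction u arbitrary: p) auto

lemma lamp_sites_append: "lamp_sites p (u @ v) = lamp_sites p u @ lamp_sites (walk_end p u) v"
  by (induction u arbitrary: p) auto

lemma start_in_visited: "p \<in> set (visited p w)"
  by (cases w) auto

lemma set_visited_append:
  "set (visited p (u @ v)) = set (visited p u) \<union> set (visited (walk_end p u) v)"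
  by (induction u arbitrary: p) (auto simp: start_in_visited)

lemma length_visited: "length (visited p w) = Suc (length w)"
  by (induction w arbitrary: p) auto

lemma lamp_sites_subset_visited: "set (lamp_sites p w) \<subseteq> set (visited p w)"
proof (induction w arbitrary: p)
  case (Cons l w)
  then show ?case
    using step_A[of l] by fastforce
qed simp

lemma visited_split:
  assumes "q \<in> set (visited p w)"
  shows "\<exists>u v. w = u @ v \<and> walk_end p u = q"
  using assms
proof (induction w arbitrary: p)
  case (Cons l w)
  show ?case
  proof (cases "q = p")
    case True
    then show ?thesis
      by (intro exI[of _ "[]"] exI[of _ "l # w"]) simp
  next
    case False
    then have "q \<in> set (visited (p + step l) w)"
      using Cons.prems by simp
    then obtain u v where "w = u @ v" "walk_end (p + step l) u = q"
      using Cons.IH by blast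
    then show ?thesis
      by (intro exI[of _ "l # u"] exI[of _ v]) simp
  qed
qed simp

lemma walk_end_replicate:
  "walk_end p (replicate m l) = p + (int m * fst (step l), int m * snd (step l))"
  by (induction m arbitrary: p) (auto simp: algebra_simps prod_eq_iff)

lemma visited_replicate:
  assumes "k \<le> m"
  shows "p + (int k * fst (step l), int k * snd (step l)) \<in> set (visited p (replicate m l))"
proof -
  have "replicate m l = replicate k l @ replicate (m - k) l"
    using assms by (simp flip: replicate_add)
  then show ?thesis
    by (simp add: set_visited_append walk_end_replicate start_in_visited)
qed

fun coord :: "gen \<Rightarrow> int \<times> int \<Rightarrow> int" where
  "coord S p = fst p"
| "coord T p = snd p"
| "coord A p = 0"

definition count_gen :: "gen \<Rightarrow> word \<Rightarrow> nat" where
  "count_gen g w = length (filter (\<lambda>l. fst l = g) w)"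

lemma count_gen_append: "count_gen g (u @ v) = count_gen g u + count_gen g v"
  by (simp add: count_gen_def)

lemma coord_walk_end: "\<bar>coord g (walk_end p w) - coord g p\<bar> \<le> int (count_gen g w)"
proof (induction w arbitrary: p)
  case (Cons l w)
  have "\<bar>coord g (p + step l) - coord g p\<bar> \<le> (if fst l = g then 1 else 0)"
    by (cases g; cases l; cases "fst l") auto
  with Cons.IH[of "p + step l"] show ?case
    by (auto simp: count_gen_def)
qed (simp add: count_gen_def)

lemma coord_visited:
  assumes "q \<in> set (visited p w)"
  shows "\<bar>coord g q - coord g p\<bar> \<le> int (count_gen g w)"
proof -
  obtain u v where "w = u @ v" "walk_end p u = q"
    using visited_split[OF assms] by blast
  then show ?thesis
    using coord_walk_end[of g p u] by (simp add: count_gen_append)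
qed

text \<open>A closed walk through \<open>r\<close> can be rotated to start at \<open>r\<close> without changing the set of
  visited points, so it suffices to bound the distance to the starting point.\<close>

lemma closed_walk_coord_start:
  assumes "walk_end p w = p" and "r \<in> set (visited p w)"
  shows "2 * \<bar>coord g r - coord g p\<bar> \<le> int (count_gen g w)"
proof -
  obtain u v where w: "w = u @ v" and r: "walk_end p u = r"
    using visited_split[OF assms(2)] by blast
  then have "walk_end r v = p"
    using assms(1) by (simp add: walk_end_append)
  then have "\<bar>coord g r - coord g p\<bar> \<le> int (count_gen g v)"
    using coord_walk_end[of g r v] by (simp add: abs_minus_commute)
  moreover have "\<bar>coord g r - coord g p\<bar> \<le> int (count_gen g u)"
    using coord_walk_end[of g p u] r by simp
  ultimately show ?thesis
    by (simp add: w count_gen_append)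
qed

lemma closed_walk_coord:
  assumes closed: "walk_end p w = p" and r: "r \<in> set (visited p w)" and r': "r' \<in> set (visited p w)"
  shows "2 * \<bar>coord g r - coord g r'\<bar> \<le> int (count_gen g w)"
proof -
  obtain u v where w: "w = u @ v" and ur: "walk_end p u = r"
    using visited_split[OF r] by blast
  have "walk_end r (v @ u) = r"
    using closed w ur by (simp add: walk_end_append)
  moreover have "r' \<in> set (visited r (v @ u))"
    using r' w ur closed by (auto simp: set_visited_append walk_end_append)
  ultimately have "2 * \<bar>coord g r' - coord g r\<bar> \<le> int (count_gen g (v @ u))"
    by (rule closed_walk_coord_start)
  then show ?thesis
    using w by (simp add: count_gen_append abs_minus_commute)
qed

fun swap_gen :: "gen \<Rightarrow> gen" where
  "swap_gen S = T"
| "swap_gen T = S"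
| "swap_gen A = A"

definition swap_letter :: "letter \<Rightarrow> letter" where
  "swap_letter l = (swap_gen (fst l), snd l)"

lemma step_swap_letter: "step (swap_letter l) = prod.swap (step l)"
  by (cases l; cases "fst l") (auto simp: swap_letter_def)

lemma is_move_swap_letter: "is_move (swap_letter l) \<longleftrightarrow> is_move l"
  by (cases l; cases "fst l") (auto simp: swap_letter_def is_move_def)

lemma swap_add: "prod.swap (p + q) = prod.swap p + prod.swap q"
  by (simp add: prod_eq_iff)

lemma walk_end_swap: "walk_end (prod.swap p) (map swap_letter w) = prod.swap (walk_end p w)"
  by (induction w arbitrary: p) (simp_all add: step_swap_letter flip: swap_add)

lemma visited_swap: "visited (prod.swap p) (map swap_letter w) = map prod.swap (visited p w)"
  by (induction w arbitrary: p) (simp_all add: step_swap_letter flip: swap_add)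

definition straight_path :: "int \<times> int \<Rightarrow> word" where
  "straight_path d = replicate (nat (fst d)) (S, False) @ replicate (nat (- fst d)) (S, True)
     @ replicate (nat (snd d)) (T, False) @ replicate (nat (- snd d)) (T, True)"

lemma walk_end_straight_path: "walk_end p (straight_path d) = p + d"
  by (simp add: straight_path_def walk_end_append walk_end_replicate prod_eq_iff)

lemma length_straight_path: "length (straight_path d) = nat \<bar>fst d\<bar> + nat \<bar>snd d\<bar>"
  by (simp add: straight_path_def)

lemma is_move_straight_path: "l \<in> set (straight_path d) \<Longrightarrow> is_move l"
  by (auto simp: straight_path_def is_move_def)

definition covering_route :: "nat \<Rightarrow> int \<times> int \<Rightarrow> word \<Rightarrow> bool" where
  "covering_route n e w \<longleftrightarrow> w \<noteq> [] \<and> (\<forall>l\<in>set w. is_move l) \<and> length w \<le> 6 * n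
     \<and> walk_end 0 w = e \<and> triangle (int n) \<subseteq> lamp_closure (set (visited 0 w))"

text \<open>From the origin the route runs to \<open>(n, 0)\<close>, back along the row to \<open>(- n, 0)\<close>, up the
  column to \<open>(- n, n)\<close>, and then straight to \<open>e\<close>.\<close>

lemma covering_route_exists_above_diagonal:
  assumes "1 \<le> n" and e: "\<bar>fst e\<bar> + \<bar>snd e\<bar> \<le> int n" and "fst e \<le> snd e"
  shows "\<exists>w. covering_route n e w"
proof -
  define hook where "hook = replicate n (S, False) @ replicate (2 * n) (S, True) @ replicate n (T, False)"
  define w where "w = hook @ straight_path (e - (- int n, int n))"
  have hook_end: "walk_end 0 hook = (- int n, int n)"
    by (simp add: hook_def walk_end_append walk_end_replicate)
  have "(i, 0) \<in> set (visited 0 hook)" if "- int n \<le> i" "i \<le> int n" for i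
    using visited_replicate[of "nat (int n - i)" "2 * n" "(int n, 0)" "(S, True)"] that
    by (auto simp: hook_def set_visited_append walk_end_replicate)
  moreover have "(- int n, j) \<in> set (visited 0 hook)" if "0 \<le> j" "j \<le> int n" for j
    using visited_replicate[of "nat j" n "(- int n, 0)" "(T, False)"] that
    by (auto simp: hook_def set_visited_append walk_end_replicate walk_end_append)
  ultimately have "triangle (int n) \<subseteq> lamp_closure (set (visited 0 hook))"
    by (rule triangle_subset_lamp_closure)
  also have "\<dots> \<subseteq> lamp_closure (set (visited 0 w))"
    by (rule lamp_closure_mono) (simp add: w_def set_visited_append)
  finally have "triangle (int n) \<subseteq> lamp_closure (set (visited 0 w))" .
  moreover have "length w \<le> 6 * n"
    using e \<open>fst e \<le> snd e\<close> by (simp add: w_def hook_def length_straight_path)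
  moreover have "walk_end 0 w = e"
    by (simp add: w_def walk_end_append hook_end walk_end_straight_path)
  moreover have "\<forall>l\<in>set w. is_move l"
    by (auto simp: w_def hook_def is_move_def dest: is_move_straight_path)
  moreover have "w \<noteq> []"
    using \<open>1 \<le> n\<close> by (simp add: w_def hook_def)
  ultimately show ?thesis
    unfolding covering_route_def by blast
qed

lemma covering_route_exists:
  assumes "1 \<le> n" and e: "\<bar>fst e\<bar> + \<bar>snd e\<bar> \<le> int n"
  shows "\<exists>w. covering_route n e w"
proof (cases "fst e \<le> snd e")
  case False
  then obtain w where w: "covering_route n (prod.swap e) w"
    using covering_route_exists_above_diagonal[OF assms(1), of "prod.swap e"] e by auto
  have "triangle (int n) = prod.swap ` triangle (int n)"
    by (simp add: swap_triangle)
  also have "\<dots> \<subseteq> prod.swap ` lamp_closure (set (visited 0 w))"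
    using w by (auto simp: covering_route_def)
  also have "\<dots> \<subseteq> lamp_closure (set (visited 0 (map swap_letter w)))"
    using lamp_closure_swap visited_swap[of 0 w] by auto
  finally have "covering_route n e (map swap_letter w)"
    using w walk_end_swap[of 0 w]
    by (auto simp: covering_route_def is_move_swap_letter)
  then show ?thesis ..
qed (use covering_route_exists_above_diagonal assms in auto)

lemma abs_grp_Cons_Cons: "abs_grp (x # y # w) = abs_grp [x] + abs_grp (y # w)"
  using abs_grp_append[of "[x]" "y # w"] by simp

lemma abs_grp_letter: "abs_grp [l] = (if fst l = A then aG else pos (step l))"
proof -
  obtain g b where l: "l = (g, b)"
    by fastforce
  have "abs_grp [(g, True)] = - abs_grp [(g, False)]"
    using abs_grp_winv[of "[(g, False)]"] by (simp add: linv_def)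
  moreover have "abs_grp [(A, False)] = aG" "abs_grp [(S, False)] = sG" "abs_grp [(T, False)] = tG"
    by (simp_all add: aG_def sG_def tG_def ga_def gs_def gt_def)
  ultimately show ?thesis
    by (cases g; cases b) (simp_all add: l pos_def)
qed

lemma pos_add_abs_grp: "pos p + abs_grp w = lamps (lamp_sites p w) + pos (walk_end p w)"
proof (induction w arbitrary: p)
  case Nil
  then show ?case
    by (simp add: abs_grp_Nil)
next
  case (Cons l w)
  have "pos p + abs_grp [l] = (if fst l = A then lamp p else 0) + pos (p + step l)"
    by (simp add: abs_grp_letter step_A pos_add lamp_def add.assoc)
  then have "pos p + abs_grp (l # w) = (if fst l = A then lamp p else 0) + (pos (p + step l) + abs_grp w)"
    using abs_grp_append[of "[l]" w] by (simp flip: add.assoc)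
  with Cons.IH show ?case
    by (simp add: lamps_append add.assoc)
qed

lemma abs_grp_eq_lamps_add_pos: "abs_grp w = lamps (lamp_sites 0 w) + pos (walk_end 0 w)"
  using pos_add_abs_grp[of 0 w] by simp

fun toggle_word :: "bool list \<Rightarrow> word \<Rightarrow> word" where
  "toggle_word (b # bs) (l # w) = (if b then ga else []) @ l # toggle_word bs w"
| "toggle_word [b] [] = (if b then ga else [])"
| "toggle_word _ _ = []"

lemma toggle_word_Cons:
  "length bs = length w \<Longrightarrow> toggle_word (b # bs) w = (if b then ga else []) @ toggle_word (False # bs) w"
  by (cases w; cases bs) auto

lemma lamp_sites_toggle_word:
  "length bs = Suc (length w) \<Longrightarrow> \<forall>l\<in>set w. is_move l \<Longrightarrow>
    lamp_sites p (toggle_word bs w) = selected (visited p w) bs"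
  by (induction bs w arbitrary: p rule: toggle_word.induct)
    (auto simp: ga_def is_move_def lamp_sites_append)

lemma walk_end_toggle_word:
  "length bs = Suc (length w) \<Longrightarrow> walk_end p (toggle_word bs w) = walk_end p w"
  by (induction bs w arbitrary: p rule: toggle_word.induct) (auto simp: ga_def walk_end_append)

text \<open>The generator of \<open>\<A>\<close> realising a move together with the lamps toggled just before and just
  after it; for inverse moves, \<open>a\<^sup>-\<^sup>1 = a\<close> is used.\<close>

fun generator_for :: "bool \<Rightarrow> letter \<Rightarrow> bool \<Rightarrow> agen \<times> bool" where
  "generator_for b (S, i) b' = ((if b then (if b' then Gasa else if i then Gsa else Gas)
                                else if b' then (if i then Gas else Gsa) else Gs), i)"
| "generator_for b (T, i) b' = ((if b then (if b' then Gata else if i then Gta else Gat)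
                                else if b' then (if i then Gat else Gta) else Gt), i)"
| "generator_for b (A, i) b' = (Ga, i)"

lemma abs_grp_generator_for:
  assumes "is_move l"
  shows "abs_grp (evalA [generator_for b l b'])
    = abs_grp ((if b then ga else []) @ l # (if b' then ga else []))"
proof -
  obtain g i where l: "l = (g, i)" and "g \<noteq> A"
    using assms by (cases l) (auto simp: is_move_def)
  then show ?thesis
    by (cases g; cases i; cases b; cases b')
      (simp_all add: evalA_def ga_def gs_def gt_def linv_def abs_grp_Cons_Cons abs_grp_letter)
qed

lemma evalA_Cons: "evalA (x # ws) = evalA [x] @ evalA ws"
  by (simp add: evalA_def)

lemma toggle_word_as_generators:
  assumes "w \<noteq> []" and "\<forall>l\<in>set w. is_move l" and "length bs = Suc (length w)"
  shows "\<exists>ws. length ws = length w \<and> abs_grp (evalA ws) = abs_grp (toggle_word bs w)"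
  using assms
proof (induction w arbitrary: bs)
  case (Cons l w)
  then obtain b b' bs' where bs: "bs = b # b' # bs'" and len: "length bs' = length w"
    by (auto simp: length_Suc_conv)
  define x where "x = generator_for b l b'"
  have x: "abs_grp (evalA [x]) = abs_grp ((if b then ga else []) @ l # (if b' then ga else []))"
    using Cons.prems(2) by (simp add: x_def abs_grp_generator_for)
  have "toggle_word bs (l # w)
      = ((if b then ga else []) @ l # (if b' then ga else [])) @ toggle_word (False # bs') w"
    using toggle_word_Cons[OF len, of b'] by (simp add: bs)
  then have split: "abs_grp (toggle_word bs (l # w))
      = abs_grp ((if b then ga else []) @ l # (if b' then ga else [])) + abs_grp (toggle_word (False # bs') w)"
    by (simp only: abs_grp_append)
  show ?case
  proof (cases "w = []")
    case True
    then show ?thesis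
      using x split len by (intro exI[of _ "[x]"]) (simp add: abs_grp_Nil)
  next
    case False
    then obtain ws where "length ws = length w" "abs_grp (evalA ws) = abs_grp (toggle_word (False # bs') w)"
      using Cons.IH[of "False # bs'"] Cons.prems len by auto
    moreover have "abs_grp (evalA (x # ws)) = abs_grp (evalA [x]) + abs_grp (evalA ws)"
      by (simp only: evalA_Cons[of x ws] abs_grp_append)
    ultimately show ?thesis
      using x split by (intro exI[of _ "x # ws"]) simp
  qed
qed simp

section \<open>The upper bound\<close>

lemma walk_end_in_visited: "walk_end p w \<in> set (visited p w)"
  by (induction w arbitrary: p) auto

lemma lamp_sites_moves: "\<forall>l\<in>set w. is_move l \<Longrightarrow> lamp_sites p w = []"
  by (induction w arbitrary: p) (auto simp: is_move_def)

lemma gn_word: "gn n = replicate n (S, False) @ ga @ replicate n (S, True) @ replicate n (T, False) @ ga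
    @ replicate (2 * n) (T, True) @ ga @ replicate n (T, False)"
proof -
  have "nat (2 * int n) = 2 * n"
    by simp
  then show ?thesis
    by (simp add: gn_def wpow_def gs_def gt_def ga_def linv_def)
qed

lemma walk_end_gn: "walk_end 0 (gn n) = 0"
  by (simp add: gn_word walk_end_append walk_end_replicate ga_def)

lemma lamp_sites_gn: "lamp_sites 0 (gn n) = [(int n, 0), (0, int n), (0, - int n)]"
  by (simp add: gn_word walk_end_append lamp_sites_append walk_end_replicate lamp_sites_moves
      is_move_def ga_def)

lemma count_moves_evalA: "count_gen S (evalA ws) + count_gen T (evalA ws) \<le> length ws"
proof (induction ws)
  case (Cons x ws)
  obtain g b where x: "x = (g, b)"
    by fastforce
  have "count_gen S (evalA [x]) + count_gen T (evalA [x]) \<le> 1"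
    by (cases g; cases b) (simp_all add: x evalA_def count_gen_def ga_def gs_def gt_def linv_def)
  with Cons.IH show ?case
    by (simp add: evalA_Cons[of x ws] count_gen_append)
qed (simp add: evalA_def count_gen_def)

lemma visited_evalA_bound:
  assumes "q \<in> set (visited 0 (evalA ws))"
  shows "\<bar>fst q\<bar> + \<bar>snd q\<bar> \<le> int (length ws)"
  using coord_visited[OF assms, of S] coord_visited[OF assms, of T] count_moves_evalA[of ws]
  by simp

lemma gn_add_short_word:
  assumes "1 \<le> n" and "length ws \<le> n"
  shows "\<exists>ws'. length ws' \<le> 6 * n \<and> abs_grp (evalA ws') = abs_grp (gn n) + abs_grp (evalA ws)"
proof -
  define P where "P = lamp_sites 0 (gn n) @ lamp_sites 0 (evalA ws)"
  define e where "e = walk_end 0 (evalA ws)"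
  have target: "abs_grp (gn n) + abs_grp (evalA ws) = lamps P + pos e"
    using abs_grp_eq_lamps_add_pos[of "gn n"] abs_grp_eq_lamps_add_pos[of "evalA ws"]
    by (simp add: P_def e_def lamps_append walk_end_gn add.assoc)
  have short: "\<bar>fst q\<bar> + \<bar>snd q\<bar> \<le> int n" if "q \<in> set (visited 0 (evalA ws))" for q
    using visited_evalA_bound[OF that] assms(2) by simp
  have "set (lamp_sites 0 (evalA ws)) \<subseteq> triangle (int n)"
    using short lamp_sites_subset_visited[of 0 "evalA ws"] in_triangle_of_norm by blast
  then have "set P \<subseteq> triangle (int n)"
    by (auto simp: P_def lamp_sites_gn triangle_def)
  moreover obtain w where w: "covering_route n e w"
    using covering_route_exists[OF assms(1) short] by (metis e_def walk_end_in_visited)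
  ultimately have "set P \<subseteq> lamp_closure (set (visited 0 w))"
    by (auto simp: covering_route_def)
  then obtain P' where P': "set P' \<subseteq> set (visited 0 w)" "lamps P = lamps P'"
    using lamps_lamp_closure by blast
  then obtain bs where bs: "length bs = length (visited 0 w)" "lamps P = lamps (selected (visited 0 w) bs)"
    using lamps_eq_lamps_selected by metis
  have moves: "w \<noteq> []" "\<forall>l\<in>set w. is_move l" "length bs = Suc (length w)"
    using w bs(1) by (auto simp: covering_route_def length_visited)
  have "abs_grp (toggle_word bs w) = lamps P + pos e"
    using abs_grp_eq_lamps_add_pos[of "toggle_word bs w"] w moves bs(2)
    by (simp add: lamp_sites_toggle_word walk_end_toggle_word covering_route_def)
  moreover obtain ws' where "length ws' = length w" "abs_grp (evalA ws') = abs_grp (toggle_word bs w)"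
    using toggle_word_as_generators[OF moves] by blast
  ultimately show ?thesis
    using w target by (intro exI[of _ ws']) (simp add: covering_route_def)
qed

section \<open>The lower bound\<close>

text \<open>\<open>binom_parity i m\<close> is the coefficient of \<open>y\<^sup>m\<close> in the power series \<open>(1 + y)\<^sup>-\<^sup>i\<close> over \<open>\<bbbF>\<^sub>2\<close>.\<close>

definition binom_parity :: "int \<Rightarrow> int \<Rightarrow> bool" where
  "binom_parity i m \<longleftrightarrow> 0 \<le> m \<and>
     odd (if 1 \<le> i then nat (i + m - 1) choose nat m else nat (- i) choose nat m)"

lemma binom_parity_0 [simp]: "binom_parity i 0"
  by (simp add: binom_parity_def)

lemma binom_parity_nonneg: "binom_parity i m \<Longrightarrow> 0 \<le> m"
  by (simp add: binom_parity_def)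

lemma not_binom_parity_negative [simp]: "m < 0 \<Longrightarrow> \<not> binom_parity i m"
  by (simp add: binom_parity_def)

lemma binom_parity_diff_1: "binom_parity (i - 1) m \<longleftrightarrow> binom_parity i m \<noteq> binom_parity i (m - 1)"
proof (cases "m \<le> 0")
  case True
  then show ?thesis
    by (cases "m = 0") (simp_all add: binom_parity_def)
next
  case False
  define k where "k = nat (m - 1)"
  have k: "nat m = Suc k" "nat (m - 1) = k"
    using False by (simp_all add: k_def)
  consider "2 \<le> i" | "i = 1" | "i \<le> 0"
    by linarith
  then show ?thesis
  proof cases
    case 1
    define N where "N = nat (i + m - 2)"
    have "nat (i - 1 + m - 1) = N" "nat (i + m - 1) = Suc N" "nat (i + (m - 1) - 1) = N"
      using 1 False by (simp_all add: N_def)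
    with 1 False k show ?thesis
      by (auto simp: binom_parity_def)
  next
    case 2
    with False k show ?thesis
      by (simp add: binom_parity_def)
  next
    case 3
    have "nat (- (i - 1)) = Suc (nat (- i))"
      using 3 by simp
    with 3 False k show ?thesis
      by (auto simp: binom_parity_def)
  qed
qed

definition lamp_functional :: "(int \<times> int \<Rightarrow> bool) \<Rightarrow> bool" where
  "lamp_functional \<phi> \<longleftrightarrow> (\<forall>i j. \<phi> (i - 1, j) = (\<phi> (i, j) \<noteq> \<phi> (i, j - 1)))"

lemma lamp_functional_row: "lamp_functional (\<lambda>q. binom_parity (fst q) (snd q - c))"
  by (simp add: lamp_functional_def binom_parity_diff_1 algebra_simps)

lemma lamp_functional_column: "lamp_functional (\<lambda>q. binom_parity (snd q) (fst q - c))"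
  by (auto simp: lamp_functional_def binom_parity_diff_1 algebra_simps)

lemma lamp_functional_antidiagonal: "lamp_functional (\<lambda>q. binom_parity (fst q) (c - fst q - snd q))"
proof -
  have "binom_parity (i - 1) (c - i - j + 1) = (binom_parity i (c - i - j + 1) \<noteq> binom_parity i (c - i - j))"
    for i j
    using binom_parity_diff_1[of i "c - i - j + 1"] by simp
  then show ?thesis
    by (auto simp: lamp_functional_def algebra_simps)
qed

definition lamp_parity :: "(int \<times> int \<Rightarrow> bool) \<Rightarrow> int \<times> int \<Rightarrow> word \<Rightarrow> bool" where
  "lamp_parity \<phi> p w \<longleftrightarrow> odd (length (filter \<phi> (lamp_sites p w)))"

lemma lamp_parity_append:
  "lamp_parity \<phi> p (u @ v) \<longleftrightarrow> lamp_parity \<phi> p u \<noteq> lamp_parity \<phi> (walk_end p u) v"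
  by (simp add: lamp_parity_def lamp_sites_append)

lemma walk_end_cancel: "walk_end p (x # linv x # w) = walk_end p w"
  by (cases x; cases "fst x") (simp_all add: linv_def add.assoc)

lemma lamp_parity_cancel: "lamp_parity \<phi> p (x # linv x # w) = lamp_parity \<phi> p w"
  by (cases x; cases "fst x") (simp_all add: linv_def lamp_parity_def add.assoc)

lemma walk_end_relator: "r \<in> relators \<Longrightarrow> walk_end p r = p"
  by (auto simp: relators_def comm_def conj_def ga_def gs_def gt_def linv_def)

lemma lamp_parity_relator:
  assumes "lamp_functional \<phi>" and "r \<in> relators"
  shows "\<not> lamp_parity \<phi> p r"
proof -
  obtain i j where p: "p = (i, j)"
    by fastforce
  have "lamp_sites p r \<in> {[p, p], [p, (i, j - 1), p, (i, j - 1)], [], [(i - 1, j), (i, j - 1), p]}"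
    using assms(2) by (auto simp: p relators_def comm_def conj_def ga_def gs_def gt_def linv_def)
  moreover have "\<phi> (i - 1, j) = (\<phi> (i, j) \<noteq> \<phi> (i, j - 1))"
    using assms(1) by (simp add: lamp_functional_def)
  ultimately show ?thesis
    by (cases "\<phi> (i, j)"; cases "\<phi> (i, j - 1)") (auto simp: p lamp_parity_def)
qed

lemma walk_end_geq: "geq u v \<Longrightarrow> walk_end p u = walk_end p v"
proof (induction arbitrary: p rule: geq.induct)
  case (geq_cancel u x v)
  then show ?case
    by (simp only: walk_end_append append_Cons append_Nil walk_end_cancel)
next
  case (geq_rel r u v)
  then show ?case
    by (simp add: walk_end_append walk_end_relator)
qed auto

lemma lamp_parity_geq:
  assumes "lamp_functional \<phi>"
  shows "geq u v \<Longrightarrow> lamp_parity \<phi> p u = lamp_parity \<phi> p v"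
proof (induction arbitrary: p rule: geq.induct)
  case (geq_cancel u x v)
  then show ?case
    by (simp only: lamp_parity_append walk_end_append append_Cons append_Nil lamp_parity_cancel)
next
  case (geq_rel r u v)
  then show ?case
    using lamp_parity_relator[OF assms]
    by (simp add: lamp_parity_append walk_end_append walk_end_relator)
qed auto

lemma lamp_parity_visits:
  assumes "lamp_parity \<phi> p w"
  shows "\<exists>q\<in>set (visited p w). \<phi> q"
proof -
  have "filter \<phi> (lamp_sites p w) \<noteq> []"
    using assms by (auto simp: lamp_parity_def)
  then show ?thesis
    using lamp_sites_subset_visited by (fastforce simp: filter_empty_conv)
qed

lemma length_ge_of_geq_gn:
  assumes "1 \<le> n" and "geq (evalA ws) (gn n)"
  shows "6 * n \<le> length ws"
proof -
  define w where "w = evalA ws"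
  have visits: "\<exists>q\<in>set (visited 0 w). \<phi> q"
    if "lamp_functional \<phi>" "odd (length (filter \<phi> [(int n, 0), (0, int n), (0, - int n)]))" for \<phi>
    using lamp_parity_geq[OF that(1) assms(2), of 0] that(2)
    by (intro lamp_parity_visits) (simp add: w_def lamp_parity_def lamp_sites_gn)
  obtain q1 where q1: "q1 \<in> set (visited 0 w)" "binom_parity (fst q1) (snd q1 - int n)"
    using visits[OF lamp_functional_row[of "int n"]] assms(1) by auto
  obtain q2 where q2: "q2 \<in> set (visited 0 w)" "binom_parity (snd q2) (fst q2 - int n)"
    using visits[OF lamp_functional_column[of "int n"]] assms(1) by auto
  obtain q3 where q3: "q3 \<in> set (visited 0 w)" "binom_parity (fst q3) (- int n - fst q3 - snd q3)"
    using visits[OF lamp_functional_antidiagonal[of "- int n"]] assms(1) by auto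
  have closed: "walk_end 0 w = 0"
    using walk_end_geq[OF assms(2)] by (simp add: w_def walk_end_gn)
  have "2 * fst q2 - 2 * fst q3 \<le> int (count_gen S w)"
    using closed_walk_coord[OF closed q2(1) q3(1), of S] by (simp only: coord.simps) arith
  moreover have "2 * snd q1 - 2 * snd q3 \<le> int (count_gen T w)"
    using closed_walk_coord[OF closed q1(1) q3(1), of T] by (simp only: coord.simps) arith
  moreover have "count_gen S w + count_gen T w \<le> length ws"
    using count_moves_evalA by (simp add: w_def)
  ultimately show ?thesis
    using binom_parity_nonneg[OF q1(2)] binom_parity_nonneg[OF q2(2)] binom_parity_nonneg[OF q3(2)]
    by linarith
qed

lemma length_ge_of_geq_tpow:
  assumes "geq (evalA ws) (replicate m (T, False))"
  shows "m \<le> length ws"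
proof -
  have "walk_end 0 (evalA ws) = (0, int m)"
    using walk_end_geq[OF assms, of 0] by (simp add: walk_end_replicate)
  then have "int m \<le> int (count_gen T (evalA ws))"
    using coord_walk_end[of T 0 "evalA ws"] by simp
  then show ?thesis
    using count_moves_evalA[of ws] by linarith
qed

fun letter_generator :: "letter \<Rightarrow> agen \<times> bool" where
  "letter_generator (A, b) = (Ga, b)"
| "letter_generator (S, b) = (Gs, b)"
| "letter_generator (T, b) = (Gt, b)"

lemma evalA_map_letter_generator: "evalA (map letter_generator w) = w"
proof (induction w)
  case (Cons l w)
  have "evalA [letter_generator l] = [l]"
    by (cases l; cases "fst l"; cases "snd l") (auto simp: evalA_def ga_def gs_def gt_def linv_def)
  with Cons show ?case
    using evalA_Cons[of "letter_generator l" "map letter_generator w"] by simp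
qed (simp add: evalA_def)

lemma dA_attained:
  "\<exists>ws. length ws = dA g h \<and> abs_grp (evalA ws) = - abs_grp g + abs_grp h"
proof -
  have "\<exists>k ws. length ws = k \<and> geq (evalA ws) (winv g @ h)"
    using evalA_map_letter_generator geq_refl by metis
  then have "\<exists>ws. length ws = dA g h \<and> geq (evalA ws) (winv g @ h)"
    unfolding dA_def by (rule LeastI_ex)
  then show ?thesis
    by (simp add: abs_grp_eq_iff [symmetric] abs_grp_append abs_grp_winv)
qed

lemma dA_le:
  assumes "abs_grp (evalA ws) = - abs_grp g + abs_grp h"
  shows "dA g h \<le> length ws"
  unfolding dA_def
  using assms by (intro Least_le) (auto simp: abs_grp_eq_iff [symmetric] abs_grp_append abs_grp_winv)

lemma depth_gt:
  assumes "dA [] g < dA [] h0" and "\<And>h. dA [] g < dA [] h \<Longrightarrow> m < dA g h"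
  shows "m < depth g"
proof -
  have "\<exists>h. dA [] g < dA [] h \<and> dA g h = depth g"
    unfolding depth_def by (rule LeastI_ex) (use assms(1) in blast)
  then obtain h where "dA [] g < dA [] h" "dA g h = depth g"
    by blast
  then show ?thesis
    using assms(2) by metis
qed

lemma evalA_Nil: "evalA [] = []"
  by (simp add: evalA_def)

lemma dA_gn_le: "1 \<le> n \<Longrightarrow> dA [] (gn n) \<le> 6 * n"
  using gn_add_short_word[of n "[]"] dA_le[of _ "[]" "gn n"]
  by (force simp: evalA_Nil abs_grp_Nil)

lemma dA_gn_ge: "1 \<le> n \<Longrightarrow> 6 * n \<le> dA [] (gn n)"
  using dA_attained[of "[]" "gn n"] length_ge_of_geq_gn
  by (force simp: abs_grp_Nil abs_grp_eq_iff)

lemma dA_le_of_dA_gn_le: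
  assumes "1 \<le> n" and "dA (gn n) h \<le> n"
  shows "dA [] h \<le> 6 * n"
proof -
  obtain ws where ws: "length ws = dA (gn n) h" "abs_grp (evalA ws) = - abs_grp (gn n) + abs_grp h"
    using dA_attained by blast
  have "length ws \<le> n"
    using ws(1) assms(2) by simp
  then obtain ws' where "length ws' \<le> 6 * n" "abs_grp (evalA ws') = abs_grp (gn n) + abs_grp (evalA ws)"
    using gn_add_short_word[OF assms(1)] by blast
  with ws(2) have "dA [] h \<le> length ws'"
    by (intro dA_le) (simp add: abs_grp_Nil add.assoc)
  with \<open>length ws' \<le> 6 * n\<close> show ?thesis
    by simp
qed

lemma dA_tpow_ge: "m \<le> dA [] (replicate m (T, False))"
  using dA_attained[of "[]" "replicate m (T, False)"] length_ge_of_geq_tpow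
  by (force simp: abs_grp_Nil abs_grp_eq_iff)

theorem mainTheorem7:
  fixes n :: nat
  assumes "n \<ge> 1"
  shows "dA [] (gn n) = 6 * n
         \<and> (\<forall>h. dA [] h > 6 * n \<longrightarrow> dA (gn n) h > n)
         \<and> depth (gn n) \<ge> n"
proof -
  have length: "dA [] (gn n) = 6 * n"
    using dA_gn_le[OF assms] dA_gn_ge[OF assms] by simp
  moreover have far: "\<forall>h. dA [] h > 6 * n \<longrightarrow> dA (gn n) h > n"
    using dA_le_of_dA_gn_le[OF assms] by (meson not_le)
  moreover have "n < depth (gn n)"
  proof (rule depth_gt)
    show "dA [] (gn n) < dA [] (replicate (6 * n + 1) (T, False))"
      using dA_tpow_ge[of "6 * n + 1"] length by simp
  qed (use far length in simp)
  ultimately show ?thesis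
    by simp
qed

end
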